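(* Suppose each $f_i:\mathbb{R}^d\to\mathbb{R}$ is $\mu$-strongly convex and differentiable, with $\mu>0$ and $\lambda>0$. Set $h(x)=\lambda\psi(x)+\frac{\mu}{2n}\|x\|^2$ and $\phi(x)=f(x)-\frac{\mu}{2n}\|x\|^2$ on $\mathbb{R}^{nd}$, and let $L_h=\frac{\lambda+\mu}{n}$ be the smoothness constant of $h$. Then the proximal gradient iteration $$x^{k+1}=\mathrm{prox}_{\frac1{L_h}\phi}\Big(x^k-\tfrac1{L_h}\nabla h(x^k)\Big)$$ satisfies, for every $i$, $$x_i^{k+1}=\mathrm{prox}_{\frac1\lambda f_i}(\bar x^k)=\arg\min_{z\in\mathbb{R}^d}\Big\{f_i(z)+\tfrac\lambda2\|z-\bar x^k\|^2\Big\}.$$ Moreover, this iteration reaches an $\varepsilon$-suboptimal point of $F=h+\phi$ within $\mathcal{O}\big(\frac{\lambda}{\mu}\log\frac1\varepsilon\big)$ iterations.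
   Context: For $x=[x_1,\dots,x_n]\in\mathbb{R}^{nd}$ with $x_i\in\mathbb{R}^d$, define $$f(x)=\frac1n\sum_{i=1}^n f_i(x_i),\qquad \psi(x)=\frac1{2n}\sum_{i=1}^n\|x_i-\bar x\|^2,\qquad \bar x=\frac1n\sum_i x_i,\qquad F=f+\lambda\psi .$$ The proximal operator is $\mathrm{prox}_{\gamma\phi}(v)=\arg\min_x\{\phi(x)+\frac1{2\gamma}\|x-v\|^2\}$. *)

theory Defs
  imports "HOL-Analysis.Analysis"
begin

definition strongly_convex :: "('a::real_normed_vector \<Rightarrow> real) \<Rightarrow> real \<Rightarrow> bool" where
  "strongly_convex g m \<longleftrightarrow>
     (\<forall>x y t. 0 \<le> t \<and> t \<le> 1 \<longrightarrow>
        g ((1 - t) *\<^sub>R x + t *\<^sub>R y)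
          \<le> (1 - t) * g x + t * g y - m / 2 * t * (1 - t) * (norm (x - y))\<^sup>2)"

text \<open>Proximal operator: prox_{gamma phi}(v) = argmin_x phi x + 1/(2 gamma) ||x - v||^2
  (a minimizer chosen by Hilbert choice; unique in all uses below).\<close>
definition prox :: "real \<Rightarrow> ('a::real_normed_vector \<Rightarrow> real) \<Rightarrow> 'a \<Rightarrow> 'a" where
  "prox \<gamma> g v = (SOME x. \<forall>y. g x + 1 / (2 * \<gamma>) * (norm (x - v))\<^sup>2
                              \<le> g y + 1 / (2 * \<gamma>) * (norm (y - v))\<^sup>2)"

definition grad :: "('a::real_inner \<Rightarrow> real) \<Rightarrow> 'a \<Rightarrow> 'a" where
  "grad g x = (SOME v. (g has_derivative (\<lambda>h. v \<bullet> h)) (at x))"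

definition avg :: "('a::real_vector) ^ 'n \<Rightarrow> 'a" where
  "avg x = (1 / real CARD('n)) *\<^sub>R (\<Sum>i\<in>UNIV. x $ i)"

end

theory Submission
  imports Defs
begin

text \<open>After the gradient step on h every block of the iterate equals lam / (lam + mu) times
  the average; at such a point the proximal problem of phi separates into the n problems
  min f_i(z) + lam/2 |z - avg x|^2, since the quadratic -mu/2 |y|^2 + (lam + mu)/2 |y - c a|^2
  equals lam/2 |y - a|^2 up to a constant.  For the rate, the new iterate y minimises each
  block problem, and n F(y) is bounded by the block objective of the convex combination
  w = (1 - t) x + t z for any z; strong convexity of the f_i and convexity of the dispersion
  then give F(y) - F* \<le> (1 - t)(F(x) - F*) with t = mu / (lam + mu), i.e. a contraction whose
  iteration count is (1 + lam / mu) log(1 / epsilon).\<close>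

lemma norm_convex_combination_power2:
  fixes u v :: "'a::real_inner"
  shows "(norm ((1 - t) *\<^sub>R u + t *\<^sub>R v))\<^sup>2
    = (1 - t) * (norm u)\<^sup>2 + t * (norm v)\<^sup>2 - t * (1 - t) * (norm (u - v))\<^sup>2"
  by (simp add: power2_norm_eq_inner inner_diff_left inner_diff_right inner_add_left
      inner_add_right inner_commute algebra_simps)

lemma strongly_convex_derivative_le:
  fixes g :: "'a::real_normed_vector \<Rightarrow> real"
  assumes sc: "strongly_convex g m" and m: "m \<ge> 0" and D: "(g has_derivative D) (at a)"
  shows "D (z - a) \<le> g z - g a"
proof -
  let ?u = "z - a"
  have line: "((\<lambda>t::real. a + t *\<^sub>R ?u) has_derivative (\<lambda>s. s *\<^sub>R ?u)) (at 0)"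
    by (auto intro!: derivative_eq_intros)
  have "((\<lambda>t::real. g (a + t *\<^sub>R ?u)) has_derivative (\<lambda>s. D (s *\<^sub>R ?u))) (at 0)"
    using has_derivative_compose[OF line, of g D] D by simp
  moreover have "(\<lambda>s. D (s *\<^sub>R ?u)) = (*) (D ?u)"
    using linear_cmul[OF has_derivative_linear[OF D]] by (auto simp: fun_eq_iff)
  ultimately have "((\<lambda>t. g (a + t *\<^sub>R ?u)) has_field_derivative D ?u) (at 0)"
    by (simp add: has_field_derivative_def)
  then have "((\<lambda>t. (g (a + t *\<^sub>R ?u) - g a) / t) \<longlongrightarrow> D ?u) (at_right 0)"
    by (simp add: has_field_derivative_iff filterlim_at_split)
  moreover have "\<forall>\<^sub>F t in at_right 0. (g (a + t *\<^sub>R ?u) - g a) / t \<le> g z - g a"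
    unfolding eventually_at_right_field
  proof (intro exI[of _ 1] conjI allI impI)
    fix t :: real assume t: "0 < t" "t < 1"
    have "g ((1 - t) *\<^sub>R a + t *\<^sub>R z)
        \<le> (1 - t) * g a + t * g z - m / 2 * t * (1 - t) * (norm (a - z))\<^sup>2"
      using sc t unfolding strongly_convex_def by auto
    also have "\<dots> \<le> (1 - t) * g a + t * g z" using m t by simp
    finally have "g (a + t *\<^sub>R ?u) - g a \<le> t * (g z - g a)"
      by (simp add: algebra_simps)
    then show "(g (a + t *\<^sub>R ?u) - g a) / t \<le> g z - g a"
      using t by (simp add: divide_simps mult.commute)
  qed simp
  ultimately show ?thesis by (rule tendsto_upperbound) simp
qed

definition prox_point :: "real \<Rightarrow> ('a::real_normed_vector \<Rightarrow> real) \<Rightarrow> 'a \<Rightarrow> 'a \<Rightarrow> bool" where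
  "prox_point \<gamma> g v p \<longleftrightarrow>
     (\<forall>y. g p + 1 / (2 * \<gamma>) * (norm (p - v))\<^sup>2 \<le> g y + 1 / (2 * \<gamma>) * (norm (y - v))\<^sup>2)"

lemma strongly_convex_prox_point_exists:
  fixes g :: "'a::euclidean_space \<Rightarrow> real"
  assumes sc: "strongly_convex g m" and m: "m \<ge> 0" and dif: "\<And>z. g differentiable (at z)"
    and \<gamma>: "\<gamma> > 0"
  shows "\<exists>p. prox_point \<gamma> g v p"
proof -
  define c where "c = 1 / (2 * \<gamma>)"
  define K where "K = (\<lambda>y. g y + c * (norm (y - v))\<^sup>2)"
  have c: "c > 0" using \<gamma> by (simp add: c_def)
  obtain D where D: "(g has_derivative D) (at v)" using dif[of v] by (auto simp: differentiable_def)
  obtain B where B: "B > 0" "\<And>x. norm (D x) \<le> norm x * B"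
    using bounded_linear.pos_bounded[OF has_derivative_bounded_linear[OF D]] by blast
  \<comment> \<open>The tangent bound g y \<ge> g v - B |y - v| makes K coercive: outside cball v (B / c) it exceeds K v.\<close>
  have far: "K v < K y" if "norm (y - v) > B / c" for y
  proof -
    have "D (y - v) \<le> g y - g v" by (rule strongly_convex_derivative_le[OF sc m D])
    moreover have "- (norm (y - v) * B) \<le> D (y - v)" using B(2)[of "y - v"] by (simp add: abs_le_iff)
    moreover have "norm (y - v) * B < c * (norm (y - v))\<^sup>2"
    proof -
      have "B < c * norm (y - v)" using that c by (simp add: divide_simps mult.commute)
      moreover have "0 < norm (y - v)" using that B c by (smt (verit) divide_pos_pos)
      ultimately show ?thesis by (simp add: power2_eq_square)
    qed
    ultimately show ?thesis unfolding K_def by simp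
  qed
  have cont: "continuous_on UNIV g"
    using dif by (intro differentiable_imp_continuous_on)
      (auto simp: differentiable_on_def intro: differentiable_at_withinI)
  have "continuous_on (cball v (B / c)) K"
    unfolding K_def by (intro continuous_intros continuous_on_subset[OF cont]) auto
  then obtain p where p: "p \<in> cball v (B / c)" "\<And>y. y \<in> cball v (B / c) \<Longrightarrow> K p \<le> K y"
    using continuous_attains_inf[OF compact_cball] B c
    by (metis centre_in_cball less_eq_real_def divide_pos_pos empty_iff)
  have "K p \<le> K y" for y
  proof (cases "y \<in> cball v (B / c)")
    case False
    then have "K v < K y" by (intro far) (simp add: dist_norm norm_minus_commute)
    moreover have "K p \<le> K v" using p B c by simp
    ultimately show ?thesis by simp
  qed (use p in blast)
  then show ?thesis unfolding prox_point_def K_def c_def by blast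
qed

lemma strongly_convex_prox_point_unique:
  fixes g :: "'a::real_inner \<Rightarrow> real"
  assumes sc: "strongly_convex g m" and m: "m \<ge> 0" and \<gamma>: "\<gamma> > 0"
    and p: "prox_point \<gamma> g v p" and q: "prox_point \<gamma> g v q"
  shows "p = q"
proof -
  define c where "c = 1 / (2 * \<gamma>)"
  define w where "w = (1 - 1/2) *\<^sub>R p + (1/2::real) *\<^sub>R q"
  have c: "c > 0" using \<gamma> by (simp add: c_def)
  have "g w \<le> g p / 2 + g q / 2 - m * (norm (p - q))\<^sup>2 / 8"
    using sc[unfolded strongly_convex_def, rule_format, of "1/2" p q] unfolding w_def by simp
  moreover have "0 \<le> m * (norm (p - q))\<^sup>2 / 8" using m by simp
  ultimately have gw: "g w \<le> g p / 2 + g q / 2" by linarith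
  \<comment> \<open>The quadratic term is strictly convex: the midpoint gains c |p - q|^2 / 4.\<close>
  have "w - v = (1 - 1/2) *\<^sub>R (p - v) + (1/2::real) *\<^sub>R (q - v)"
    unfolding w_def by (simp add: algebra_simps flip: scaleR_add_left)
  then have "(norm (w - v))\<^sup>2 = (1 - 1/2) * (norm (p - v))\<^sup>2 + 1/2 * (norm (q - v))\<^sup>2
      - 1/2 * (1 - 1/2) * (norm ((p - v) - (q - v)))\<^sup>2"
    by (simp only: norm_convex_combination_power2)
  then have "(norm (w - v))\<^sup>2 = (norm (p - v))\<^sup>2 / 2 + (norm (q - v))\<^sup>2 / 2 - (norm (p - q))\<^sup>2 / 4"
    by simp
  then have nw: "c * (norm (w - v))\<^sup>2
      = c * (norm (p - v))\<^sup>2 / 2 + c * (norm (q - v))\<^sup>2 / 2 - c * (norm (p - q))\<^sup>2 / 4"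
    by (simp add: right_diff_distrib distrib_left)
  have "g p + c * (norm (p - v))\<^sup>2 \<le> g w + c * (norm (w - v))\<^sup>2"
    and "g q + c * (norm (q - v))\<^sup>2 \<le> g w + c * (norm (w - v))\<^sup>2"
    using p q unfolding prox_point_def c_def by auto
  then have "c * (norm (p - q))\<^sup>2 \<le> 0" using gw nw by linarith
  then have "norm (p - q) = 0" using c by (simp add: mult_le_0_iff)
  then show ?thesis by simp
qed

lemma prox_eq_some_prox_point: "prox \<gamma> g v = (SOME p. prox_point \<gamma> g v p)"
  unfolding prox_def prox_point_def ..

lemma strongly_convex_prox_point_iff:
  fixes g :: "'a::euclidean_space \<Rightarrow> real"
  assumes "strongly_convex g m" "m \<ge> 0" "\<And>z. g differentiable (at z)" "\<gamma> > 0"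
  shows "prox_point \<gamma> g v p \<longleftrightarrow> p = prox \<gamma> g v"
proof -
  have "prox_point \<gamma> g v (prox \<gamma> g v)"
    unfolding prox_eq_some_prox_point using strongly_convex_prox_point_exists[OF assms] by (rule someI_ex)
  then show ?thesis using strongly_convex_prox_point_unique[OF assms(1,2,4)] by blast
qed

lemma strongly_convex_prox_minimal:
  fixes g :: "'a::euclidean_space \<Rightarrow> real"
  assumes "strongly_convex g m" "m \<ge> 0" "\<And>z. g differentiable (at z)" "0 < lam"
  shows "g (prox (1 / lam) g a) + lam / 2 * (norm (prox (1 / lam) g a - a))\<^sup>2
    \<le> g z + lam / 2 * (norm (z - a))\<^sup>2"
proof -
  have "prox_point (1 / lam) g a (prox (1 / lam) g a)"
    using strongly_convex_prox_point_iff[OF assms(1-3)] assms(4) by simp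
  then show ?thesis by (simp add: prox_point_def)
qed

lemma prox_eqI:
  assumes "prox_point \<gamma> g v p" "\<And>q. prox_point \<gamma> g v q \<Longrightarrow> q = p"
  shows "prox \<gamma> g v = p"
  unfolding prox_eq_some_prox_point using assms by (rule some_equality)

lemma avg_add: "avg (x + y) = avg x + avg (y :: ('a::real_vector)^'n)"
  by (simp add: avg_def sum.distrib scaleR_add_right)

lemma avg_diff: "avg (x - y) = avg x - avg (y :: ('a::real_vector)^'n)"
  by (simp add: avg_def sum_subtractf scaleR_diff_right)

lemma avg_scaleR: "avg (c *\<^sub>R x) = c *\<^sub>R avg (x :: ('a::real_vector)^'n)"
  by (simp add: avg_def scaleR_sum_right[symmetric] mult.commute)

lemma bounded_linear_avg: "bounded_linear (avg :: ('a::real_normed_vector)^'n::finite \<Rightarrow> 'a)"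
  unfolding avg_def[abs_def]
  by (intro bounded_linear_const_scaleR bounded_linear_sum bounded_linear_vec_nth)

lemma sum_deviation_avg: "(\<Sum>i\<in>UNIV. x $ i - avg x) = 0"
  for x :: "('a::real_vector)^'n::finite"
  by (simp add: sum_subtractf avg_def sum_constant_scaleR)

lemma power2_norm_vec: "(norm x)\<^sup>2 = (\<Sum>i\<in>UNIV. (norm (x $ i))\<^sup>2)"
  for x :: "('a::real_normed_vector)^'n::finite"
  by (simp add: norm_vec_def L2_set_def sum_nonneg)

definition dispersion :: "('a::real_normed_vector)^'n::finite \<Rightarrow> real" where
  "dispersion x = (\<Sum>i\<in>UNIV. (norm (x $ i - avg x))\<^sup>2)"

lemma sum_norm_diff_power2_eq_dispersion:
  fixes y :: "('a::real_inner)^'n::finite"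
  shows "(\<Sum>i\<in>UNIV. (norm (y $ i - a))\<^sup>2) = dispersion y + real CARD('n) * (norm (avg y - a))\<^sup>2"
proof -
  have "(norm (y $ i - a))\<^sup>2
      = (norm (y $ i - avg y))\<^sup>2 + 2 * ((y $ i - avg y) \<bullet> (avg y - a)) + (norm (avg y - a))\<^sup>2" for i
    using dot_norm[of "y $ i - avg y" "avg y - a"] by simp
  moreover have "(\<Sum>i\<in>UNIV. (y $ i - avg y) \<bullet> (avg y - a)) = 0"
    by (simp add: sum_deviation_avg flip: inner_sum_left)
  ultimately show ?thesis
    by (simp add: dispersion_def sum.distrib flip: sum_distrib_left)
qed

lemma card_norm_avg_power2_le:
  fixes y :: "('a::real_inner)^'n::finite"
  shows "real CARD('n) * (norm (avg y))\<^sup>2 \<le> (norm y)\<^sup>2"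
proof -
  have "0 \<le> dispersion y" by (simp add: dispersion_def sum_nonneg)
  then show ?thesis
    using sum_norm_diff_power2_eq_dispersion[of y 0] by (simp add: power2_norm_vec)
qed

lemma dispersion_convex:
  fixes x z :: "('a::real_inner)^'n::finite"
  assumes "0 \<le> t" "t \<le> 1"
  shows "dispersion ((1 - t) *\<^sub>R x + t *\<^sub>R z) \<le> (1 - t) * dispersion x + t * dispersion z"
proof -
  let ?w = "(1 - t) *\<^sub>R x + t *\<^sub>R z"
  have "?w $ i - avg ?w = (1 - t) *\<^sub>R (x $ i - avg x) + t *\<^sub>R (z $ i - avg z)" for i
    by (simp only: vector_add_component vector_scaleR_component avg_add avg_scaleR)
      (simp add: algebra_simps)
  then have "(norm (?w $ i - avg ?w))\<^sup>2
      \<le> (1 - t) * (norm (x $ i - avg x))\<^sup>2 + t * (norm (z $ i - avg z))\<^sup>2" for i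
    using assms by (simp add: norm_convex_combination_power2)
  then have "dispersion ?w
      \<le> (\<Sum>i\<in>UNIV. (1 - t) * (norm (x $ i - avg x))\<^sup>2 + t * (norm (z $ i - avg z))\<^sup>2)"
    unfolding dispersion_def by (rule sum_mono)
  then show ?thesis by (simp add: dispersion_def sum.distrib sum_distrib_left)
qed

lemma has_derivative_dispersion:
  fixes x :: "('a::real_inner)^'n::finite"
  shows "(dispersion has_derivative (\<lambda>k. (2 *\<^sub>R (\<chi> i. x $ i - avg x)) \<bullet> k)) (at x)"
proof -
  have dev: "bounded_linear (\<lambda>x::'a^'n. x $ i - avg x)" for i
    by (intro bounded_linear_sub bounded_linear_vec_nth bounded_linear_avg)
  have "(dispersion has_derivative
      (\<lambda>k. \<Sum>i\<in>UNIV. (x $ i - avg x) \<bullet> (k $ i - avg k) + (k $ i - avg k) \<bullet> (x $ i - avg x))) (at x)"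
    unfolding dispersion_def power2_norm_eq_inner
    by (intro has_derivative_sum has_derivative_inner bounded_linear.has_derivative[OF dev]
        has_derivative_ident)
  moreover have "(\<Sum>i\<in>UNIV. (x $ i - avg x) \<bullet> (k $ i - avg k) + (k $ i - avg k) \<bullet> (x $ i - avg x))
      = (2 *\<^sub>R (\<chi> i. x $ i - avg x)) \<bullet> k" for k
  proof -
    \<comment> \<open>The deviations of x sum to zero, so the avg k part of k $ i - avg k contributes nothing.\<close>
    have "(\<Sum>i\<in>UNIV. (x $ i - avg x) \<bullet> avg k) = 0"
      by (simp add: sum_deviation_avg flip: inner_sum_left)
    moreover have "(x $ i - avg x) \<bullet> (k $ i - avg k) + (k $ i - avg k) \<bullet> (x $ i - avg x)
        = 2 * ((x $ i - avg x) \<bullet> k $ i) - 2 * ((x $ i - avg x) \<bullet> avg k)" for i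
      by (simp add: inner_diff_right inner_diff_left inner_commute algebra_simps)
    ultimately show ?thesis
      by (simp add: inner_vec_def sum_subtractf flip: sum_distrib_left)
  qed
  ultimately show ?thesis by simp
qed

lemma grad_eqI:
  assumes "(g has_derivative (\<lambda>k. v \<bullet> k)) (at x)"
  shows "grad g x = v"
  unfolding grad_def
proof (rule some_equality)
  fix w assume "(g has_derivative (\<lambda>k. w \<bullet> k)) (at x)"
  then have "(\<lambda>k. w \<bullet> k) = (\<lambda>k. v \<bullet> k)" using assms by (rule has_derivative_unique)
  then have "(w - v) \<bullet> (w - v) = 0" by (metis inner_diff_left diff_self)
  then show "w = v" by simp
qed (rule assms)

lemma grad_dispersion_plus_norm_power2:
  fixes x :: "('a::real_inner)^'n::finite"
  shows "grad (\<lambda>x. a * dispersion x + b * (norm x)\<^sup>2) x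
    = (\<chi> i. (2 * a) *\<^sub>R (x $ i - avg x) + (2 * b) *\<^sub>R x $ i)"
proof (rule grad_eqI)
  have "((\<lambda>x. (norm x)\<^sup>2) has_derivative (\<lambda>k. x \<bullet> k + k \<bullet> x)) (at x)"
    unfolding power2_norm_eq_inner by (intro has_derivative_inner has_derivative_ident)
  then have "((\<lambda>x. a * dispersion x + b * (norm x)\<^sup>2) has_derivative
      (\<lambda>k. a * ((2 *\<^sub>R (\<chi> i. x $ i - avg x)) \<bullet> k) + b * (x \<bullet> k + k \<bullet> x))) (at x)"
    by (intro has_derivative_add has_derivative_mult_right has_derivative_dispersion)
  moreover have "a * ((2 *\<^sub>R (\<chi> i. x $ i - avg x)) \<bullet> k) + b * (x \<bullet> k + k \<bullet> x)
      = (\<chi> i. (2 * a) *\<^sub>R (x $ i - avg x) + (2 * b) *\<^sub>R x $ i) \<bullet> k" for k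
    by (simp add: inner_vec_def inner_add_left inner_commute[of "k $ _"] sum.distrib
        sum_subtractf sum_distrib_left algebra_simps)
  ultimately show "((\<lambda>x. a * dispersion x + b * (norm x)\<^sup>2) has_derivative
      (\<lambda>k. (\<chi> i. (2 * a) *\<^sub>R (x $ i - avg x) + (2 * b) *\<^sub>R x $ i) \<bullet> k)) (at x)"
    by simp
qed

lemma sum_blocks_minimal_iff:
  fixes K :: "'n::finite \<Rightarrow> 'a \<Rightarrow> real" and p :: "'a^'n"
  shows "(\<forall>y. (\<Sum>i\<in>UNIV. K i (p $ i)) \<le> (\<Sum>i\<in>UNIV. K i (y $ i))) \<longleftrightarrow> (\<forall>i z. K i (p $ i) \<le> K i z)"
proof
  assume min: "\<forall>y. (\<Sum>i\<in>UNIV. K i (p $ i)) \<le> (\<Sum>i\<in>UNIV. K i (y $ i))"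
  show "\<forall>i z. K i (p $ i) \<le> K i z"
  proof (intro allI)
    fix i z
    let ?y = "\<chi> j. if j = i then z else p $ j"
    have "(\<Sum>j\<in>UNIV. K j (p $ j)) \<le> (\<Sum>j\<in>UNIV. K j (?y $ j))" using min by blast
    moreover have "(\<Sum>j\<in>UNIV - {i}. K j (?y $ j)) = (\<Sum>j\<in>UNIV - {i}. K j (p $ j))"
      by (rule sum.cong) auto
    ultimately have "K i (p $ i) + (\<Sum>j\<in>UNIV - {i}. K j (p $ j)) \<le> K i z + (\<Sum>j\<in>UNIV - {i}. K j (p $ j))"
      by (simp add: sum.remove[of UNIV i])
    then show "K i (p $ i) \<le> K i z" by simp
  qed
qed (auto intro: sum_mono)

lemma norm_power2_shifted_difference:
  fixes y a :: "'a::real_inner"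
  assumes "lam + mu \<noteq> 0"
  shows "(lam + mu) / 2 * (norm (y - (lam / (lam + mu)) *\<^sub>R a))\<^sup>2 - mu / 2 * (norm y)\<^sup>2
    = lam / 2 * (norm (y - a))\<^sup>2 - lam * mu / (2 * (lam + mu)) * (norm a)\<^sup>2"
proof -
  define c where "c = lam / (lam + mu)"
  have c: "(lam + mu) * c = lam" and coeff: "lam * mu / (2 * (lam + mu)) = lam * (1 - c) / 2"
    using assms by (simp_all add: c_def field_simps)
  have expand: "(norm (y - s *\<^sub>R a))\<^sup>2 = (norm y)\<^sup>2 - 2 * s * (y \<bullet> a) + s\<^sup>2 * (norm a)\<^sup>2" for s
    unfolding power2_norm_eq_inner
    by (simp add: inner_diff_left inner_diff_right inner_commute power2_eq_square algebra_simps)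
  have "(lam + mu) / 2 * (Y - 2 * c * P + c\<^sup>2 * A) - mu / 2 * Y
      - (lam / 2 * (Y - 2 * 1 * P + 1\<^sup>2 * A) - lam * (1 - c) / 2 * A)
      = ((lam + mu) * c - lam) * (c * A / 2 - P)" for Y P A :: real
    by (simp add: field_simps power2_eq_square)
  then have "(lam + mu) / 2 * (Y - 2 * c * P + c\<^sup>2 * A) - mu / 2 * Y
      = lam / 2 * (Y - 2 * 1 * P + 1\<^sup>2 * A) - lam * (1 - c) / 2 * A" for Y P A :: real
    unfolding c by (metis eq_iff_diff_eq_0 mult_zero_left diff_self)
  then show ?thesis
    unfolding coeff c_def[symmetric] expand[of c] expand[of 1, simplified] by simp
qed

lemma prox_point_separable_iff:
  fixes f :: "'n::finite \<Rightarrow> 'a::real_inner \<Rightarrow> real"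
  assumes "0 < lam + mu"
  defines "n \<equiv> real CARD('n)"
  shows "prox_point (n / (lam + mu)) (\<lambda>y. 1 / n * (\<Sum>i\<in>UNIV. f i (y $ i)) - mu / (2 * n) * (norm y)\<^sup>2)
      (\<chi> i. (lam / (lam + mu)) *\<^sub>R a) p
    \<longleftrightarrow> (\<forall>i. prox_point (1 / lam) (f i) a (p $ i))"
proof -
  define K where "K i z = f i z + lam / 2 * (norm (z - a))\<^sup>2" for i z
  define C where "C = - (lam * mu / (2 * (lam + mu)) * (norm a)\<^sup>2)"
  have n: "n > 0" by (simp add: n_def)
  have obj: "1 / n * (\<Sum>i\<in>UNIV. f i (y $ i)) - mu / (2 * n) * (norm y)\<^sup>2
      + 1 / (2 * (n / (lam + mu))) * (norm (y - (\<chi> i. (lam / (lam + mu)) *\<^sub>R a)))\<^sup>2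
      = 1 / n * ((\<Sum>i\<in>UNIV. K i (y $ i)) + n * C)" for y
  proof -
    have "(lam + mu) / 2 * (norm (y $ i - (lam / (lam + mu)) *\<^sub>R a))\<^sup>2 - mu / 2 * (norm (y $ i))\<^sup>2
        = lam / 2 * (norm (y $ i - a))\<^sup>2 + C" for i
      using norm_power2_shifted_difference[of lam mu "y $ i" a] assms unfolding C_def by simp
    then have quad: "(lam + mu) / 2 * (norm (y - (\<chi> i. (lam / (lam + mu)) *\<^sub>R a)))\<^sup>2 - mu / 2 * (norm y)\<^sup>2
        = (\<Sum>i\<in>UNIV. lam / 2 * (norm (y $ i - a))\<^sup>2) + n * C"
      by (simp add: power2_norm_vec[of y] power2_norm_vec[of "y - _"] n_def sum_distrib_left
          sum.distrib flip: sum_subtractf)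
    have "1 / n * (\<Sum>i\<in>UNIV. f i (y $ i)) - mu / (2 * n) * (norm y)\<^sup>2
        + 1 / (2 * (n / (lam + mu))) * (norm (y - (\<chi> i. (lam / (lam + mu)) *\<^sub>R a)))\<^sup>2
      = 1 / n * ((\<Sum>i\<in>UNIV. f i (y $ i))
        + ((lam + mu) / 2 * (norm (y - (\<chi> i. (lam / (lam + mu)) *\<^sub>R a)))\<^sup>2 - mu / 2 * (norm y)\<^sup>2))"
      using n by (simp add: field_simps)
    then show ?thesis
      unfolding quad by (simp add: K_def sum.distrib)
  qed
  have "prox_point (n / (lam + mu)) (\<lambda>y. 1 / n * (\<Sum>i\<in>UNIV. f i (y $ i)) - mu / (2 * n) * (norm y)\<^sup>2)
      (\<chi> i. (lam / (lam + mu)) *\<^sub>R a) p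
    \<longleftrightarrow> (\<forall>y. (\<Sum>i\<in>UNIV. K i (p $ i)) \<le> (\<Sum>i\<in>UNIV. K i (y $ i)))"
    unfolding prox_point_def obj using n by (simp add: divide_le_cancel)
  also have "\<dots> \<longleftrightarrow> (\<forall>i z. K i (p $ i) \<le> K i z)" by (rule sum_blocks_minimal_iff)
  also have "\<dots> \<longleftrightarrow> (\<forall>i. prox_point (1 / lam) (f i) a (p $ i))"
    by (simp add: prox_point_def K_def)
  finally show ?thesis .
qed

lemma gradient_step_consensus:
  fixes x :: "('a::real_inner)^'n::finite"
  assumes "0 < lam + mu"
  defines "n \<equiv> real CARD('n)"
  shows "x - (n / (lam + mu)) *\<^sub>R grad (\<lambda>x. lam / (2 * n) * dispersion x + mu / (2 * n) * (norm x)\<^sup>2) x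
    = (\<chi> i. (lam / (lam + mu)) *\<^sub>R avg x)"
proof -
  have n: "n > 0" by (simp add: n_def)
  have "x $ i - (n / (lam + mu)) *\<^sub>R ((2 * (lam / (2 * n))) *\<^sub>R (x $ i - avg x) + (2 * (mu / (2 * n))) *\<^sub>R x $ i)
      = (lam / (lam + mu)) *\<^sub>R avg x" for i
  proof -
    have "x $ i - (n / (lam + mu)) *\<^sub>R ((2 * (lam / (2 * n))) *\<^sub>R (x $ i - avg x) + (2 * (mu / (2 * n))) *\<^sub>R x $ i)
        = (1 - lam / (lam + mu) - mu / (lam + mu)) *\<^sub>R x $ i + (lam / (lam + mu)) *\<^sub>R avg x"
      using n by (simp add: algebra_simps)
    moreover have "1 - lam / (lam + mu) - mu / (lam + mu) = 0"
      using assms by (simp add: field_simps)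
    ultimately show ?thesis by simp
  qed
  then show ?thesis
    unfolding grad_dispersion_plus_norm_power2 by (simp add: vec_eq_iff)
qed

lemma prox_gradient_step_consensus:
  fixes f :: "'n::finite \<Rightarrow> 'a::euclidean_space \<Rightarrow> real"
  assumes mu: "0 < mu" and lam: "0 < lam"
    and sc: "\<And>i. strongly_convex (f i) mu" and diff: "\<And>i z. f i differentiable (at z)"
  defines "n \<equiv> real CARD('n)"
  shows "prox (n / (lam + mu)) (\<lambda>y. 1 / n * (\<Sum>i\<in>UNIV. f i (y $ i)) - mu / (2 * n) * (norm y)\<^sup>2)
      (x - (n / (lam + mu)) *\<^sub>R grad (\<lambda>x. lam / (2 * n) * dispersion x + mu / (2 * n) * (norm x)\<^sup>2) x)
    = (\<chi> i. prox (1 / lam) (f i) (avg x))"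
proof -
  have pos: "0 < lam + mu" using mu lam by simp
  have "prox_point (1 / lam) (f i) a q \<longleftrightarrow> q = prox (1 / lam) (f i) a" for i a q
    using strongly_convex_prox_point_iff[OF sc[of i] less_imp_le[OF mu] diff] lam by simp
  then have blocks: "prox_point (real CARD('n) / (lam + mu))
      (\<lambda>y. 1 / real CARD('n) * (\<Sum>i\<in>UNIV. f i (y $ i)) - mu / (2 * real CARD('n)) * (norm y)\<^sup>2)
      (\<chi> i. (lam / (lam + mu)) *\<^sub>R a) q \<longleftrightarrow> q = (\<chi> i. prox (1 / lam) (f i) a)" for a q
    unfolding prox_point_separable_iff[OF pos] by (simp add: vec_eq_iff)
  show ?thesis
    unfolding n_def gradient_step_consensus[OF pos] by (intro prox_eqI) (simp_all only: blocks)
qed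

definition consensus_objective ::
    "('n::finite \<Rightarrow> 'a::real_normed_vector \<Rightarrow> real) \<Rightarrow> real \<Rightarrow> 'a^'n \<Rightarrow> real" where
  "consensus_objective f lam y = (\<Sum>i\<in>UNIV. f i (y $ i)) + lam / 2 * dispersion y"

lemma strongly_convex_sum_blocks:
  fixes f :: "'n::finite \<Rightarrow> 'a::real_normed_vector \<Rightarrow> real"
  assumes "\<And>i. strongly_convex (f i) m"
  shows "strongly_convex (\<lambda>y::'a^'n. \<Sum>i\<in>UNIV. f i (y $ i)) m"
  unfolding strongly_convex_def
proof (intro allI impI)
  fix x y :: "'a^'n" and t :: real
  assume "0 \<le> t \<and> t \<le> 1"
  then have "f i ((1 - t) *\<^sub>R x $ i + t *\<^sub>R y $ i)
      \<le> (1 - t) * f i (x $ i) + t * f i (y $ i) - m / 2 * t * (1 - t) * (norm (x $ i - y $ i))\<^sup>2" for i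
    using assms[of i] unfolding strongly_convex_def by blast
  then have "(\<Sum>i\<in>UNIV. f i (((1 - t) *\<^sub>R x + t *\<^sub>R y) $ i))
      \<le> (\<Sum>i\<in>UNIV. (1 - t) * f i (x $ i) + t * f i (y $ i)
          - m / 2 * t * (1 - t) * (norm (x $ i - y $ i))\<^sup>2)"
    by (simp add: sum_mono)
  then show "(\<Sum>i\<in>UNIV. f i (((1 - t) *\<^sub>R x + t *\<^sub>R y) $ i))
      \<le> (1 - t) * (\<Sum>i\<in>UNIV. f i (x $ i)) + t * (\<Sum>i\<in>UNIV. f i (y $ i))
        - m / 2 * t * (1 - t) * (norm (x - y))\<^sup>2"
    by (simp add: power2_norm_vec[of "x - y"] sum.distrib sum_subtractf sum_distrib_left)
qed

lemma card_norm_avg_convex_combination_le: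
  fixes x z :: "('a::real_inner)^'n::finite"
  shows "real CARD('n) * (norm (avg ((1 - t) *\<^sub>R x + t *\<^sub>R z) - avg x))\<^sup>2 \<le> t\<^sup>2 * (norm (z - x))\<^sup>2"
proof -
  have "avg ((1 - t) *\<^sub>R x + t *\<^sub>R z) - avg x = t *\<^sub>R avg (z - x)"
    by (simp add: avg_add avg_diff avg_scaleR algebra_simps)
  then have "real CARD('n) * (norm (avg ((1 - t) *\<^sub>R x + t *\<^sub>R z) - avg x))\<^sup>2
      = t\<^sup>2 * (real CARD('n) * (norm (avg (z - x)))\<^sup>2)"
    by (simp add: power_mult_distrib)
  also have "\<dots> \<le> t\<^sup>2 * (norm (z - x))\<^sup>2"
    by (intro mult_left_mono card_norm_avg_power2_le) simp
  finally show ?thesis .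
qed

lemma consensus_objective_descent:
  fixes f :: "'n::finite \<Rightarrow> 'a::real_inner \<Rightarrow> real"
  assumes lam: "0 < lam" and mu: "0 \<le> mu" and sc: "\<And>i. strongly_convex (f i) mu"
    and y: "\<And>i z. f i (y $ i) + lam / 2 * (norm (y $ i - avg x))\<^sup>2
      \<le> f i z + lam / 2 * (norm (z - avg x))\<^sup>2"
  defines "t \<equiv> mu / (lam + mu)"
  shows "consensus_objective f lam y
    \<le> (1 - t) * consensus_objective f lam x + t * consensus_objective f lam z"
proof -
  define w where "w = (1 - t) *\<^sub>R x + t *\<^sub>R z"
  define X Z where "X = (\<Sum>i\<in>UNIV. f i (x $ i))" and "Z = (\<Sum>i\<in>UNIV. f i (z $ i))"
  define Q where "Q = (norm (x - z))\<^sup>2"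
  have t: "0 \<le> t" "t \<le> 1" using lam mu by (auto simp: t_def field_simps)
  have split: "(\<Sum>i\<in>UNIV. g i + lam / 2 * h i) = (\<Sum>i\<in>UNIV. g i) + lam / 2 * (\<Sum>i\<in>UNIV. h i)"
    for g h :: "'n \<Rightarrow> real"
    by (simp add: sum.distrib sum_distrib_left)
  have "dispersion y \<le> (\<Sum>i\<in>UNIV. (norm (y $ i - avg x))\<^sup>2)"
    by (simp add: sum_norm_diff_power2_eq_dispersion)
  then have "consensus_objective f lam y \<le> (\<Sum>i\<in>UNIV. f i (y $ i) + lam / 2 * (norm (y $ i - avg x))\<^sup>2)"
    unfolding split consensus_objective_def using lam by simp
  also have "\<dots> \<le> (\<Sum>i\<in>UNIV. f i (w $ i) + lam / 2 * (norm (w $ i - avg x))\<^sup>2)"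
    by (intro sum_mono y)
  also have "\<dots> = (\<Sum>i\<in>UNIV. f i (w $ i))
      + lam / 2 * (dispersion w + real CARD('n) * (norm (avg w - avg x))\<^sup>2)"
    unfolding split sum_norm_diff_power2_eq_dispersion ..
  also have "\<dots> \<le> ((1 - t) * X + t * Z - mu / 2 * t * (1 - t) * Q)
      + lam / 2 * (((1 - t) * dispersion x + t * dispersion z) + t\<^sup>2 * Q)"
  proof (intro add_mono mult_left_mono)
    show "(\<Sum>i\<in>UNIV. f i (w $ i)) \<le> (1 - t) * X + t * Z - mu / 2 * t * (1 - t) * Q"
      using strongly_convex_sum_blocks[of f mu, OF sc, unfolded strongly_convex_def] t
      unfolding w_def X_def Z_def Q_def by blast
    show "dispersion w \<le> (1 - t) * dispersion x + t * dispersion z"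
      unfolding w_def using t by (rule dispersion_convex)
    show "real CARD('n) * (norm (avg w - avg x))\<^sup>2 \<le> t\<^sup>2 * Q"
      unfolding w_def Q_def norm_minus_commute[of x] by (rule card_norm_avg_convex_combination_le)
  qed (use lam in simp)
  \<comment> \<open>The choice of t makes the terms in Q cancel: lam * t * t = mu * t * (1 - t).\<close>
  also have "\<dots> = (1 - t) * consensus_objective f lam x + t * consensus_objective f lam z"
  proof -
    have "lam / 2 * (t\<^sup>2 * Q) = (lam * t) * t * Q / 2" by (simp add: power2_eq_square)
    also have "lam * t = mu * (1 - t)" using lam mu by (simp add: t_def field_simps)
    finally have cancel: "lam / 2 * (t\<^sup>2 * Q) = mu / 2 * t * (1 - t) * Q" by (simp add: ac_simps)
    show ?thesis
      unfolding consensus_objective_def X_def[symmetric] Z_def[symmetric]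
      by (simp only: flip: cancel) (simp add: field_simps)
  qed
  finally show ?thesis .
qed

lemma gap_contraction:
  fixes G :: "'b \<Rightarrow> real"
  assumes "0 < t" and "\<And>z. G y \<le> (1 - t) * G x + t * G z"
  shows "G y - (INF z. G z) \<le> (1 - t) * (G x - (INF z. G z))"
proof -
  have "(G y - (1 - t) * G x) / t \<le> G z" for z
    using assms by (simp add: pos_divide_le_eq algebra_simps)
  then have "(G y - (1 - t) * G x) / t \<le> (INF z. G z)" by (intro cINF_greatest) auto
  then show ?thesis using assms(1) by (simp add: pos_divide_le_eq algebra_simps)
qed

lemma geometric_decay:
  fixes a :: "nat \<Rightarrow> real"
  assumes "0 \<le> q" and "\<And>k. a (Suc k) \<le> q * a k"
  shows "a k \<le> q ^ k * a 0"
proof (induction k)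
  case (Suc k)
  have "a (Suc k) \<le> q * a k" by (rule assms(2))
  also have "\<dots> \<le> q * (q ^ k * a 0)" using Suc assms(1) by (rule mult_left_mono)
  finally show ?case by simp
qed simp

lemma geometric_iterations_to_accuracy:
  fixes t D \<epsilon> :: real
  assumes t: "0 < t" "t < 1" and \<epsilon>: "0 < \<epsilon>"
    and k: "real k \<ge> 1 / t * ln (max 1 (D / \<epsilon>))"
  shows "(1 - t) ^ k * D \<le> \<epsilon>"
proof (cases "D \<le> 0")
  case True
  then show ?thesis using t \<epsilon> by (smt (verit) mult_nonneg_nonpos zero_le_power)
next
  case False
  define R where "R = max 1 (D / \<epsilon>)"
  have "D / \<epsilon> \<le> R" by (simp add: R_def)
  then have R: "D \<le> \<epsilon> * R" "1 \<le> R" using \<epsilon> by (simp add: pos_divide_le_eq mult.commute, simp add: R_def)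
  \<comment> \<open>ln (1 - t) \<le> - t turns the iteration bound into (1 - t) ^ k \<le> 1 / R.\<close>
  have "ln ((1 - t) ^ k) = real k * ln (1 - t)" using t by (simp add: ln_realpow)
  also have "\<dots> \<le> real k * (- t)"
    using ln_le_minus_one[of "1 - t"] t by (intro mult_left_mono) auto
  also have "\<dots> \<le> - ln R" using k t by (simp add: R_def field_simps)
  also have "\<dots> = ln (1 / R)" using R by (simp add: ln_div)
  finally have "(1 - t) ^ k \<le> 1 / R" using t R by (subst (asm) ln_le_cancel_iff) auto
  then have "(1 - t) ^ k * D \<le> 1 / R * D" using False by (intro mult_right_mono) auto
  also have "\<dots> \<le> \<epsilon>" using R by (simp add: pos_divide_le_eq)
  finally show ?thesis .
qed

theorem mainTheorem3:
  fixes f :: "'n::finite \<Rightarrow> real ^ 'd \<Rightarrow> real"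
    and \<mu> lam :: real
    and x0 :: "(real ^ 'd) ^ 'n"
  assumes mu_pos: "\<mu> > 0" and lam_pos: "lam > 0"
    and sc: "\<And>i. strongly_convex (f i) \<mu>"
    and diff: "\<And>i z. f i differentiable (at z)"
  defines "n \<equiv> real CARD('n)"
  defines "ff \<equiv> (\<lambda>x::(real ^ 'd) ^ 'n. (1 / n) * (\<Sum>i\<in>UNIV. f i (x $ i)))"
  defines "\<psi> \<equiv> (\<lambda>x::(real ^ 'd) ^ 'n. (1 / (2 * n)) * (\<Sum>i\<in>UNIV. (norm (x $ i - avg x))\<^sup>2))"
  defines "F \<equiv> (\<lambda>x. ff x + lam * \<psi> x)"
  defines "h \<equiv> (\<lambda>x. lam * \<psi> x + \<mu> / (2 * n) * (norm x)\<^sup>2)"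
  defines "\<phi> \<equiv> (\<lambda>x. ff x - \<mu> / (2 * n) * (norm x)\<^sup>2)"
  defines "Lh \<equiv> (lam + \<mu>) / n"
  defines "xs \<equiv> (\<lambda>k. ((\<lambda>x. prox (1 / Lh) \<phi> (x - (1 / Lh) *\<^sub>R grad h x)) ^^ k) x0)"
  shows "(\<forall>k i. xs (Suc k) $ i = prox (1 / lam) (f i) (avg (xs k))
              \<and> (\<forall>z. f i (xs (Suc k) $ i) + lam / 2 * (norm (xs (Suc k) $ i - avg (xs k)))\<^sup>2
                       \<le> f i z + lam / 2 * (norm (z - avg (xs k)))\<^sup>2))
       \<and> (\<forall>\<epsilon>>0. \<forall>k::nat.
             real k \<ge> (1 + lam / \<mu>) * ln (max 1 ((F x0 - (INF x. F x)) / \<epsilon>))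
             \<longrightarrow> F (xs k) - (INF x. F x) \<le> \<epsilon>)"
proof -
  let ?T = "\<lambda>x. \<chi> i. prox (1 / lam) (f i) (avg x)"
  define t where "t = \<mu> / (lam + \<mu>)"
  have t: "0 < t" "t < 1" and t_inv: "1 + lam / \<mu> = 1 / t"
    using mu_pos lam_pos by (auto simp: t_def field_simps)
  have Lh: "1 / Lh = real CARD('n) / (lam + \<mu>)" by (simp add: Lh_def n_def)
  have h: "h = (\<lambda>x. lam / (2 * real CARD('n)) * dispersion x + \<mu> / (2 * real CARD('n)) * (norm x)\<^sup>2)"
    by (simp add: h_def \<psi>_def n_def dispersion_def fun_eq_iff)
  have \<phi>: "\<phi> = (\<lambda>y. 1 / real CARD('n) * (\<Sum>i\<in>UNIV. f i (y $ i)) - \<mu> / (2 * real CARD('n)) * (norm y)\<^sup>2)"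
    by (simp add: \<phi>_def ff_def n_def fun_eq_iff)
  have xs_Suc: "xs (Suc k) = ?T (xs k)" for k
    unfolding xs_def funpow.simps o_apply Lh h \<phi>
    by (rule prox_gradient_step_consensus[OF mu_pos lam_pos sc diff])
  have prox_min: "f i (prox (1 / lam) (f i) a) + lam / 2 * (norm (prox (1 / lam) (f i) a - a))\<^sup>2
      \<le> f i z + lam / 2 * (norm (z - a))\<^sup>2" for i a z
    by (rule strongly_convex_prox_minimal[OF sc less_imp_le[OF mu_pos] diff lam_pos])
  have F_eq: "F y = consensus_objective f lam y / n" for y
    by (simp add: F_def ff_def \<psi>_def consensus_objective_def dispersion_def n_def field_simps)
  have descent: "consensus_objective f lam (xs (Suc k))
      \<le> (1 - t) * consensus_objective f lam (xs k) + t * consensus_objective f lam z" for k z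
    unfolding t_def
    by (rule consensus_objective_descent[where f = f, OF lam_pos less_imp_le[OF mu_pos] sc])
      (unfold xs_Suc vec_lambda_beta, rule prox_min)
  have "F (xs (Suc k)) \<le> (1 - t) * F (xs k) + t * F z" for k z
    using divide_right_mono[OF descent, of n k z] by (simp add: F_eq n_def add_divide_distrib)
  then have "F (xs (Suc k)) - (INF x. F x) \<le> (1 - t) * (F (xs k) - (INF x. F x))" for k
    using t by (intro gap_contraction) auto
  then have rate: "F (xs k) - (INF x. F x) \<le> (1 - t) ^ k * (F x0 - (INF x. F x))" for k
    using geometric_decay[where a = "\<lambda>k. F (xs k) - (INF x. F x)"] t by (simp add: xs_def)
  show ?thesis
    using xs_Suc prox_min rate geometric_iterations_to_accuracy[OF t] order.trans
    unfolding t_inv by fastforce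
qed

end
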